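(* The functions $f_k(z)=(1-z)\sum_{j=0}^{\infty}\frac{1}{(j+1)^k}z^j=1+\sum_{j=1}^\infty\left(\frac{1}{(j+1)^k}-\frac{1}{j^k}\right)z^j$, $k\in\mathbb{N}$ ($k\geq1$), span a dense subspace of $H^2$.
   Context: $H^2$ denotes the Hardy space of analytic functions $f(z)=\sum_{j\ge0}\hat f(j)z^j$ on the open unit disk with $\|f\|^2=\sum_{j}|\hat f(j)|^2<\infty$. *)

theory Defs
  imports "HOL-Complex_Analysis.Complex_Analysis"
begin

definition taylor_coeff :: "(complex \<Rightarrow> complex) \<Rightarrow> nat \<Rightarrow> complex" where
  "taylor_coeff f j = (deriv ^^ j) f 0 / of_nat (fact j)"

definition hardy2 :: "(complex \<Rightarrow> complex) set" where
  "hardy2 = {f. f holomorphic_on ball 0 1 \<and>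
                summable (\<lambda>j. (norm (taylor_coeff f j))\<^sup>2)}"

definition h2_norm :: "(complex \<Rightarrow> complex) \<Rightarrow> real" where
  "h2_norm f = sqrt (\<Sum>j. (norm (taylor_coeff f j))\<^sup>2)"

definition fk :: "nat \<Rightarrow> complex \<Rightarrow> complex" where
  "fk k z = (1 - z) * (\<Sum>j. z ^ j / of_nat ((j + 1) ^ k))"

end

theory Submission
  imports Defs "HOL-Computational_Algebra.Fundamental_Theorem_Algebra"
begin

(* With x_j = 1/(j+1), the j-th Taylor coefficient of f_k is x_j^k - x_(j-1)^k, so the
   coefficients of sum_k c_k f_k are the backward differences of the sequence p(x_j), where
   p(y) = sum_k c_k y^k may be any polynomial with p(0) = 0.
   A square-summable b is first replaced by a finitely supported w with zero sum: cut off a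
   small tail and spread the negated sum of the head thinly over many further indices. The
   partial sums t_j of w then vanish from some L on. The polynomial
   sum_(m<L) t_m (y/x_m)^K l_m(y), with l_m the Lagrange basis at x_0, ..., x_(L-1),
   interpolates t at these nodes and, for K large, is bounded by eta |y| on |y| <= x_L.
   Its differences reproduce w below L and are O(eta/j) beyond, hence small in l^2. *)

lemma taylor_coeff_eqI:
  assumes "r > 0" and "\<And>z. z \<in> ball 0 r \<Longrightarrow> (\<lambda>n. e n * z ^ n) sums h z"
  shows "taylor_coeff h n = e n"
proof -
  have "eventually (\<lambda>z. (\<lambda>n. fps_nth (Abs_fps e) n * z ^ n) sums h z) (nhds 0)"
    using assms by (intro eventually_nhds_in_open[THEN eventually_mono, of "ball 0 r"]) auto
  then have "h has_fps_expansion Abs_fps e"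
    by (rule has_fps_expansionI)
  from fps_nth_fps_expansion[OF this, of n] show ?thesis
    by (simp add: taylor_coeff_def)
qed

lemma taylor_coeff_sums:
  assumes "f holomorphic_on ball 0 r" and "z \<in> ball 0 r"
  shows "(\<lambda>j. taylor_coeff f j * z ^ j) sums f z"
  using holomorphic_power_series[OF assms] by (simp add: taylor_coeff_def)

definition recip_succ :: "nat \<Rightarrow> complex" where
  "recip_succ j = 1 / of_nat (Suc j)"

definition fk_coeff :: "nat \<Rightarrow> nat \<Rightarrow> complex" where
  "fk_coeff k j = recip_succ j ^ k - (if j = 0 then 0 else recip_succ (j - 1) ^ k)"

lemma norm_recip_succ: "norm (recip_succ j) = 1 / real (Suc j)"
  by (simp add: recip_succ_def norm_divide del: of_nat_Suc)

lemma fk_sums: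
  assumes "norm z < 1"
  shows "(\<lambda>j. fk_coeff k j * z ^ j) sums fk k z"
proof -
  define S where "S = (\<Sum>j. z ^ j / of_nat ((j + 1) ^ k))"
  have "summable (\<lambda>j. z ^ j / of_nat ((j + 1) ^ k))"
  proof (rule summable_comparison_test')
    show "summable (\<lambda>j. norm z ^ j)"
      using assms by (simp add: summable_geometric)
    show "norm (z ^ j / of_nat ((j + 1) ^ k)) \<le> norm z ^ j" for j
      by (simp add: norm_divide norm_power divide_le_eq mult_le_cancel_left1 del: of_nat_power)
  qed
  moreover have "recip_succ j ^ k * z ^ j = z ^ j / of_nat ((j + 1) ^ k)" for j
    by (simp add: recip_succ_def power_divide)
  ultimately have head: "(\<lambda>j. recip_succ j ^ k * z ^ j) sums S"
    by (simp add: S_def summable_sums)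
  have "(\<lambda>j. (if Suc j = 0 then 0 else recip_succ (Suc j - 1) ^ k) * z ^ Suc j) sums (z * S)"
    using sums_mult[OF head, of z] by (simp add: algebra_simps)
  from sums_Suc_iff[THEN iffD1, OF this]
  have shifted: "(\<lambda>j. (if j = 0 then 0 else recip_succ (j - 1) ^ k) * z ^ j) sums (z * S)"
    by simp
  show ?thesis
    using sums_diff[OF head shifted] by (simp add: fk_coeff_def fk_def S_def algebra_simps)
qed

definition lagrange_basis :: "('b \<Rightarrow> 'a::field) \<Rightarrow> 'b set \<Rightarrow> 'b \<Rightarrow> 'a poly" where
  "lagrange_basis x A m =
     smult (inverse (\<Prod>i\<in>A - {m}. x m - x i)) (\<Prod>i\<in>A - {m}. [:- x i, 1:])"

lemma poly_lagrange_basis: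
  assumes "finite A" and "inj_on x A" and "m \<in> A" and "j \<in> A"
  shows "poly (lagrange_basis x A m) (x j) = (if j = m then 1 else 0)"
proof (cases "j = m")
  case True
  have "(\<Prod>i\<in>A - {m}. x m - x i) \<noteq> 0"
    using assms by (auto simp: inj_on_eq_iff)
  then show ?thesis
    using True by (simp add: lagrange_basis_def poly_prod)
next
  case False
  then have "(\<Prod>i\<in>A - {m}. x j - x i) = 0"
    using assms by (intro prod_zero) auto
  then show ?thesis
    using False by (simp add: lagrange_basis_def poly_prod)
qed

lemma norm_power_Suc_divide_le:
  fixes y z :: "'a::real_normed_field"
  assumes "norm y \<le> r" and "R \<le> norm z" and "R > 0"
  shows "norm ((y / z) ^ Suc K) \<le> norm y / R * (r / R) ^ K"
proof -
  have "norm y / norm z \<le> norm y / R"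
    using assms by (intro frac_le) auto
  moreover have "norm y / R \<le> r / R"
    using assms by (simp add: divide_right_mono)
  ultimately have "norm y / norm z * (norm y / norm z) ^ K \<le> norm y / R * (r / R) ^ K"
    using assms by (intro mult_mono power_mono) auto
  then show ?thesis
    by (simp only: power_Suc norm_mult norm_power norm_divide)
qed

lemma interpolating_poly_small_near_0:
  fixes x t :: "nat \<Rightarrow> 'a::real_normed_field"
  assumes inj: "inj_on x {..<L}" and nodes: "\<And>m. m < L \<Longrightarrow> R \<le> norm (x m)"
    and r: "0 \<le> r" "r < R" and \<eta>: "\<eta> > 0"
  shows "\<exists>P. (\<forall>m<L. poly P (x m) = t m) \<and> (\<forall>y. norm y \<le> r \<longrightarrow> norm (poly P y) \<le> \<eta> * norm y)"
proof -
  define l where "l = lagrange_basis x {..<L}"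
  have "\<forall>m. \<exists>b. \<forall>y. norm y \<le> r \<longrightarrow> norm (poly (l m) y) \<le> b"
    using poly_bound_exists by blast
  then obtain B where B: "\<And>m y. norm y \<le> r \<Longrightarrow> norm (poly (l m) y) \<le> B m"
    by metis
  define q where "q = r / R"
  define C where "C = (\<Sum>m<L. norm (t m) * B m) / R"
  have "R > 0" using r by linarith
  have "0 \<le> q" "q < 1"
    using r \<open>R > 0\<close> by (auto simp: q_def)
  then have "(\<lambda>K. C * q ^ K) \<longlonglongrightarrow> 0"
    by (intro tendsto_mult_right_zero LIMSEQ_power_zero) simp
  from order_tendstoD(2)[OF this \<eta>] obtain K where K: "C * q ^ K < \<eta>"
    by (auto simp: eventually_sequentially)
  \<comment> \<open>The factor (y / x m) ^ Suc K is 1 at the node x m and at most q ^ K |y| / R for |y| \<le> r.\<close>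
  define P where "P = (\<Sum>m<L. smult (t m / x m ^ Suc K) (monom 1 (Suc K) * l m))"
  have poly_P: "poly P y = (\<Sum>m<L. t m * (y / x m) ^ Suc K * poly (l m) y)" for y
    by (simp add: P_def poly_sum poly_monom power_divide mult.assoc)
  have "poly P (x j) = t j" if "j < L" for j
  proof -
    have "x j \<noteq> 0" using nodes[OF that] \<open>R > 0\<close> by auto
    have "poly P (x j) = (\<Sum>m<L. if m = j then t m else 0)"
      unfolding poly_P l_def using that inj \<open>x j \<noteq> 0\<close>
      by (intro sum.cong) (auto simp: poly_lagrange_basis)
    then show ?thesis using that by simp
  qed
  moreover have "norm (poly P y) \<le> \<eta> * norm y" if y: "norm y \<le> r" for y
  proof -
    have "norm (t m * (y / x m) ^ Suc K * poly (l m) y) \<le> norm (t m) * B m / R * q ^ K * norm y"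
      if "m < L" for m
    proof -
      have "norm ((y / x m) ^ Suc K) \<le> norm y / R * q ^ K"
        unfolding q_def using y nodes[OF that] \<open>R > 0\<close> by (rule norm_power_Suc_divide_le)
      then have "norm (t m) * norm ((y / x m) ^ Suc K) * norm (poly (l m) y)
          \<le> norm (t m) * (norm y / R * q ^ K) * B m"
        using B[OF y, of m] \<open>R > 0\<close> \<open>q \<ge> 0\<close> by (intro mult_mono mult_left_mono) auto
      then show ?thesis
        by (simp add: norm_mult mult_ac del: power_Suc)
    qed
    then have "norm (poly P y) \<le> (\<Sum>m<L. norm (t m) * B m / R * q ^ K * norm y)"
      unfolding poly_P by (intro order_trans[OF norm_sum] sum_mono) auto
    also have "\<dots> = C * q ^ K * norm y"
      by (simp add: C_def sum_divide_distrib sum_distrib_right)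
    also have "\<dots> \<le> \<eta> * norm y"
      using K by (intro mult_right_mono) auto
    finally show ?thesis .
  qed
  ultimately show ?thesis by blast
qed

lemma summable_norm_add_square:
  fixes a c :: "nat \<Rightarrow> 'a::real_normed_vector"
  assumes "summable (\<lambda>j. (norm (a j))\<^sup>2)" and "summable (\<lambda>j. (norm (c j))\<^sup>2)"
  shows "summable (\<lambda>j. (norm (a j + c j))\<^sup>2)"
    and "(\<Sum>j. (norm (a j + c j))\<^sup>2) \<le> 2 * (\<Sum>j. (norm (a j))\<^sup>2) + 2 * (\<Sum>j. (norm (c j))\<^sup>2)"
proof -
  have bound: "(norm (a j + c j))\<^sup>2 \<le> 2 * (norm (a j))\<^sup>2 + 2 * (norm (c j))\<^sup>2" for j
  proof -
    have "(norm (a j + c j))\<^sup>2 \<le> (norm (a j) + norm (c j))\<^sup>2"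
      by (intro power_mono norm_triangle_ineq) simp
    also have "\<dots> \<le> 2 * (norm (a j))\<^sup>2 + 2 * (norm (c j))\<^sup>2"
      using sum_squares_ge_zero[of "norm (a j) - norm (c j)" 0] by (simp add: power2_eq_square algebra_simps)
    finally show ?thesis .
  qed
  have majorant: "summable (\<lambda>j. 2 * (norm (a j))\<^sup>2 + 2 * (norm (c j))\<^sup>2)"
    using assms by (intro summable_add summable_mult)
  show "summable (\<lambda>j. (norm (a j + c j))\<^sup>2)"
    using bound by (intro summable_comparison_test'[OF majorant]) auto
  then have "(\<Sum>j. (norm (a j + c j))\<^sup>2) \<le> (\<Sum>j. 2 * (norm (a j))\<^sup>2 + 2 * (norm (c j))\<^sup>2)"
    using bound majorant by (intro suminf_le) auto
  also have "\<dots> = (\<Sum>j. 2 * (norm (a j))\<^sup>2) + (\<Sum>j. 2 * (norm (c j))\<^sup>2)"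
    using assms by (intro suminf_add[symmetric] summable_mult)
  also have "\<dots> = 2 * (\<Sum>j. (norm (a j))\<^sup>2) + 2 * (\<Sum>j. (norm (c j))\<^sup>2)"
    using assms by (simp add: suminf_mult)
  finally show "(\<Sum>j. (norm (a j + c j))\<^sup>2) \<le> 2 * (\<Sum>j. (norm (a j))\<^sup>2) + 2 * (\<Sum>j. (norm (c j))\<^sup>2)" .
qed

lemma sums_norm_square_from:
  assumes "summable (\<lambda>j. (norm (b j))\<^sup>2)"
  shows "(\<lambda>j. (norm (if M \<le> j then b j else 0))\<^sup>2) sums (\<Sum>i. (norm (b (i + M)))\<^sup>2)"
proof -
  have "summable (\<lambda>i. (norm (b (i + M)))\<^sup>2)"
    using assms by (rule summable_iff_shift[THEN iffD2])
  then have "(\<lambda>i. (norm (if M \<le> i + M then b (i + M) else 0))\<^sup>2) sums (\<Sum>i. (norm (b (i + M)))\<^sup>2)"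
    by (simp add: summable_sums)
  from sums_iff_shift[THEN iffD1, OF this] show ?thesis
    by simp
qed

lemma sums_norm_square_spread:
  fixes \<beta> :: "'a::real_normed_field"
  assumes "N > 0"
  shows "(\<lambda>j. (norm (if M \<le> j \<and> j < M + N then \<beta> / of_nat N else 0))\<^sup>2) sums ((norm \<beta>)\<^sup>2 / real N)"
proof -
  define g where "g j = (norm (if M \<le> j \<and> j < M + N then \<beta> / of_nat N else 0))\<^sup>2" for j
  have "g sums (\<Sum>j\<in>{M..<M + N}. g j)"
    by (rule sums_finite) (auto simp: g_def)
  also have "(\<Sum>j\<in>{M..<M + N}. g j) = (norm \<beta>)\<^sup>2 / real N"
    using assms by (simp add: g_def norm_divide power2_eq_square)
  finally show ?thesis
    by (simp only: g_def)
qed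

lemma square_summable_approx_by_zero_sum_finite:
  fixes b :: "nat \<Rightarrow> 'a::real_normed_field"
  assumes sb: "summable (\<lambda>j. (norm (b j))\<^sup>2)" and e: "e > 0"
  shows "\<exists>L w. 0 < L \<and> (\<forall>j\<ge>L. w j = 0) \<and> (\<Sum>j<L. w j) = 0 \<and>
           summable (\<lambda>j. (norm (b j - w j))\<^sup>2) \<and> (\<Sum>j. (norm (b j - w j))\<^sup>2) < e"
proof -
  obtain M where M: "norm (\<Sum>i. (norm (b (i + M)))\<^sup>2) < e / 4"
    using suminf_exist_split[OF _ sb, of "e / 4"] e by auto
  define \<beta> where "\<beta> = (\<Sum>i<M. b i)"
  define N where "N = nat \<lceil>4 * (norm \<beta>)\<^sup>2 / e\<rceil> + 1"
  define L where "L = M + N"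
  define w where "w j = (if j < M then b j else if j < L then - \<beta> / of_nat N else 0)" for j
  have "N > 0" by (simp add: N_def)
  have "(\<Sum>j<L. w j) = (\<Sum>j<M. w j) + (\<Sum>j\<in>{M..<L}. w j)"
    by (simp add: L_def sum.atLeastLessThan_concat flip: atLeast0LessThan)
  also have "\<dots> = 0"
    using \<open>N > 0\<close> by (simp add: w_def \<beta>_def L_def)
  finally have zero_sum: "(\<Sum>j<L. w j) = 0" .
  define tail where "tail j = (if M \<le> j then b j else 0)" for j
  define spread where "spread j = (if M \<le> j \<and> j < L then \<beta> / of_nat N else 0)" for j
  have diff: "b j - w j = tail j + spread j" for j
    by (simp add: w_def tail_def spread_def L_def)
  define T where "T = (\<Sum>i. (norm (b (i + M)))\<^sup>2)"
  have tail_sums: "(\<lambda>j. (norm (tail j))\<^sup>2) sums T"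
    unfolding tail_def T_def using sb by (rule sums_norm_square_from)
  define S where "S = (norm \<beta>)\<^sup>2 / real N"
  have spread_sums: "(\<lambda>j. (norm (spread j))\<^sup>2) sums S"
    unfolding spread_def S_def L_def using \<open>N > 0\<close> by (rule sums_norm_square_spread)
  have "T < e / 4"
    using M by (simp add: T_def)
  moreover have "S < e / 4"
  proof -
    have "4 * (norm \<beta>)\<^sup>2 / e < real N"
      unfolding N_def by linarith
    then show ?thesis
      using e \<open>N > 0\<close> by (simp add: S_def field_simps)
  qed
  moreover note summable_norm_add_square[OF sums_summable[OF tail_sums] sums_summable[OF spread_sums]]
  ultimately have "summable (\<lambda>j. (norm (b j - w j))\<^sup>2) \<and> (\<Sum>j. (norm (b j - w j))\<^sup>2) < e"
    unfolding diff sums_unique[OF tail_sums, symmetric] sums_unique[OF spread_sums, symmetric]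
    by linarith
  then show ?thesis
    using zero_sum \<open>N > 0\<close> by (intro exI[of _ L] exI[of _ w]) (auto simp: w_def L_def)
qed

lemma poly_eq_sum_from_1:
  fixes p :: "'a::comm_semiring_1 poly"
  assumes "coeff p 0 = 0"
  shows "poly p x = (\<Sum>k\<in>{1..degree p}. coeff p k * x ^ k)"
proof -
  have "poly p x = (\<Sum>k\<le>degree p. coeff p k * x ^ k)"
    by (rule poly_altdef)
  also have "\<dots> = coeff p 0 + (\<Sum>k\<in>{1..degree p}. coeff p k * x ^ k)"
    by (simp add: atMost_atLeast0 sum.atLeast_Suc_atMost)
  finally show ?thesis
    using assms by simp
qed

lemma sum_fk_coeff_eq_poly_diff:
  assumes "coeff P 0 = 0"
  shows "(\<Sum>k\<in>{1..degree P}. coeff P k * fk_coeff k j)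
    = poly P (recip_succ j) - (if j = 0 then 0 else poly P (recip_succ (j - 1)))"
  using assms by (simp add: fk_coeff_def poly_eq_sum_from_1 right_diff_distrib sum_subtractf)

lemma interpolating_poly_at_recip_succ:
  assumes L: "0 < L" and \<eta>: "\<eta> > 0"
  shows "\<exists>P. coeff P 0 = 0 \<and> (\<forall>m<L. poly P (recip_succ m) = t m) \<and>
           (\<forall>j\<ge>L. norm (poly P (recip_succ j)) \<le> \<eta> / real (Suc j))"
proof -
  have "inj_on recip_succ {..<L}"
    by (auto intro: inj_onI simp: recip_succ_def)
  moreover have "1 / real L \<le> norm (recip_succ m)" if "m < L" for m
    using that by (simp add: norm_recip_succ frac_le del: of_nat_Suc)
  moreover have "1 / real (Suc L) < 1 / real L"
    using L by (simp add: frac_less2 del: of_nat_Suc)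
  ultimately obtain P where interp: "\<forall>m<L. poly P (recip_succ m) = t m"
    and small: "\<And>y. norm y \<le> 1 / real (Suc L) \<Longrightarrow> norm (poly P y) \<le> \<eta> * norm y"
    using interpolating_poly_small_near_0[of recip_succ L "1 / real L" "1 / real (Suc L)" \<eta> t] \<eta>
    by auto
  have "coeff P 0 = 0"
    using small[of 0] by (simp add: poly_0_coeff_0)
  moreover have "norm (poly P (recip_succ j)) \<le> \<eta> / real (Suc j)" if "j \<ge> L" for j
  proof -
    have "norm (recip_succ j) \<le> 1 / real (Suc L)"
      using that by (simp add: norm_recip_succ frac_le del: of_nat_Suc)
    then have "norm (poly P (recip_succ j)) \<le> \<eta> * norm (recip_succ j)"
      by (rule small)
    then show ?thesis
      by (simp add: norm_recip_succ)
  qed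
  ultimately show ?thesis
    using interp by blast
qed

(* At j = 0 the bound below reads "<= 0" (division by zero): the approximation is exact there. *)

lemma zero_sum_finite_approx_by_fk_coeff:
  fixes w :: "nat \<Rightarrow> complex"
  assumes L: "0 < L" and w_vanish: "\<And>j. j \<ge> L \<Longrightarrow> w j = 0"
    and zero_sum: "(\<Sum>j<L. w j) = 0" and \<eta>: "\<eta> > 0"
  shows "\<exists>n c. \<forall>j. norm ((\<Sum>k\<in>{1..n}. c k * fk_coeff k j) - w j) \<le> \<eta> / real j"
proof -
  define t where "t j = (\<Sum>i\<le>j. w i)" for j
  have t_vanish: "t j = 0" if "L \<le> Suc j" for j
  proof -
    have "t j = (\<Sum>i<L. w i)"
      unfolding t_def using that L w_vanish by (intro sum.mono_neutral_right) auto
    then show ?thesis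
      using zero_sum by simp
  qed
  obtain P where P0: "coeff P 0 = 0" and interp: "\<forall>m<L. poly P (recip_succ m) = t m"
    and small: "\<forall>j\<ge>L. norm (poly P (recip_succ j)) \<le> \<eta> / 2 / real (Suc j)"
    using interpolating_poly_at_recip_succ[OF L, of "\<eta> / 2" t] \<eta> by auto
  define s where "s j = poly P (recip_succ j)" for j
  have s_small: "norm (s j) \<le> \<eta> / 2 / real (Suc j)" if "L \<le> Suc j" for j
    using that \<eta> small t_vanish by (cases "j < L") (simp_all add: s_def interp)
  have "norm (s j - (if j = 0 then 0 else s (j - 1)) - w j) \<le> \<eta> / real j" for j
  proof (cases "j < L")
    case True
    have "t j = (if j = 0 then 0 else t (j - 1)) + w j"
      by (cases j) (simp_all add: t_def)
    then show ?thesis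
      using True \<eta> by (simp add: s_def interp)
  next
    case False
    have "norm (s j) \<le> \<eta> / 2 / real (Suc j)"
      using s_small False by simp
    also have "\<dots> \<le> \<eta> / 2 / real j"
      using False L \<eta> by (intro divide_left_mono) auto
    finally have "norm (s j) + norm (s (j - 1)) \<le> \<eta> / real j"
      using s_small[of "j - 1"] False L by simp
    then show ?thesis
      using False L w_vanish[of j] by (auto intro: order_trans[OF norm_triangle_ineq4])
  qed
  then show ?thesis
    unfolding s_def sum_fk_coeff_eq_poly_diff[OF P0, symmetric] by blast
qed

lemma summable_inverse_real_square: "summable (\<lambda>j. (1 / real j)\<^sup>2)"
  using inverse_power_summable[of 2, where 'a = real] by (simp add: power_one_over inverse_eq_divide)

lemma summable_norm_square_le_inverse:
  fixes d :: "nat \<Rightarrow> 'a::real_normed_vector"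
  assumes "\<And>j. norm (d j) \<le> \<eta> / real j"
  shows "summable (\<lambda>j. (norm (d j))\<^sup>2)"
    and "(\<Sum>j. (norm (d j))\<^sup>2) \<le> \<eta>\<^sup>2 * (\<Sum>j. (1 / real j)\<^sup>2)"
proof -
  have bound: "(norm (d j))\<^sup>2 \<le> \<eta>\<^sup>2 * (1 / real j)\<^sup>2" for j
  proof -
    have "(norm (d j))\<^sup>2 \<le> (\<eta> / real j)\<^sup>2"
      using assms[of j] by (intro power_mono) auto
    then show ?thesis
      by (simp add: power_divide)
  qed
  show "summable (\<lambda>j. (norm (d j))\<^sup>2)"
    using bound by (intro summable_comparison_test'[OF summable_mult[OF summable_inverse_real_square]]) auto
  then have "(\<Sum>j. (norm (d j))\<^sup>2) \<le> (\<Sum>j. \<eta>\<^sup>2 * (1 / real j)\<^sup>2)"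
    using bound summable_inverse_real_square by (intro suminf_le summable_mult) auto
  also have "\<dots> = \<eta>\<^sup>2 * (\<Sum>j. (1 / real j)\<^sup>2)"
    using summable_inverse_real_square by (simp add: suminf_mult)
  finally show "(\<Sum>j. (norm (d j))\<^sup>2) \<le> \<eta>\<^sup>2 * (\<Sum>j. (1 / real j)\<^sup>2)" .
qed

lemma square_summable_approx_by_fk_coeff:
  fixes b :: "nat \<Rightarrow> complex"
  assumes sb: "summable (\<lambda>j. (norm (b j))\<^sup>2)" and e: "e > 0"
  shows "\<exists>n c. summable (\<lambda>j. (norm (b j - (\<Sum>k\<in>{1..n}. c k * fk_coeff k j)))\<^sup>2) \<and>
           (\<Sum>j. (norm (b j - (\<Sum>k\<in>{1..n}. c k * fk_coeff k j)))\<^sup>2) < e"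
proof -
  define Z where "Z = (\<Sum>j. (1 / real j)\<^sup>2)"
  have "Z \<ge> 0"
    unfolding Z_def by (intro suminf_nonneg summable_inverse_real_square) simp
  define \<eta> where "\<eta> = sqrt (e / (4 * (Z + 1)))"
  have "\<eta> > 0"
    using e \<open>Z \<ge> 0\<close> by (simp add: \<eta>_def)
  have "\<eta>\<^sup>2 * Z \<le> e / 4"
  proof -
    have "\<eta>\<^sup>2 * Z = e / 4 * (Z / (Z + 1))"
      using e \<open>Z \<ge> 0\<close> by (simp add: \<eta>_def)
    also have "\<dots> \<le> e / 4"
      using e \<open>Z \<ge> 0\<close> by (intro mult_left_le) auto
    finally show ?thesis .
  qed
  obtain L w where L: "0 < L" and w_vanish: "\<forall>j\<ge>L. w j = 0" and zero_sum: "(\<Sum>j<L. w j) = 0"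
    and summable_bw: "summable (\<lambda>j. (norm (b j - w j))\<^sup>2)"
    and bw: "(\<Sum>j. (norm (b j - w j))\<^sup>2) < e / 4"
    using square_summable_approx_by_zero_sum_finite[OF sb, of "e / 4"] e by auto
  obtain n c where wc: "\<And>j. norm ((\<Sum>k\<in>{1..n}. c k * fk_coeff k j) - w j) \<le> \<eta> / real j"
    using zero_sum_finite_approx_by_fk_coeff[OF L _ zero_sum \<open>\<eta> > 0\<close>] w_vanish by blast
  define d where "d j = w j - (\<Sum>k\<in>{1..n}. c k * fk_coeff k j)" for j
  have d_bound: "norm (d j) \<le> \<eta> / real j" for j
    using wc[of j] by (simp add: d_def norm_minus_commute)
  have decomp: "b j - (\<Sum>k\<in>{1..n}. c k * fk_coeff k j) = (b j - w j) + d j" for j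
    by (simp add: d_def)
  have "(\<Sum>j. (norm (d j))\<^sup>2) \<le> e / 4"
    using summable_norm_square_le_inverse(2)[OF d_bound] \<open>\<eta>\<^sup>2 * Z \<le> e / 4\<close>
    unfolding Z_def by linarith
  moreover note summable_norm_add_square[OF summable_bw summable_norm_square_le_inverse(1)[OF d_bound]]
  ultimately have "summable (\<lambda>j. (norm (b j - (\<Sum>k\<in>{1..n}. c k * fk_coeff k j)))\<^sup>2) \<and>
      (\<Sum>j. (norm (b j - (\<Sum>k\<in>{1..n}. c k * fk_coeff k j)))\<^sup>2) < e"
    unfolding decomp using bw by linarith
  then show ?thesis by blast
qed

lemma taylor_coeff_diff_fk_combination:
  assumes "f holomorphic_on ball 0 1"
  shows "taylor_coeff (\<lambda>z. f z - (\<Sum>k\<in>{1..n}. c k * fk k z)) j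
    = taylor_coeff f j - (\<Sum>k\<in>{1..n}. c k * fk_coeff k j)"
proof (rule taylor_coeff_eqI[of 1])
  fix z :: complex
  assume z: "z \<in> ball 0 1"
  have "(\<lambda>j. \<Sum>k\<in>{1..n}. c k * (fk_coeff k j * z ^ j)) sums (\<Sum>k\<in>{1..n}. c k * fk k z)"
    using z by (intro sums_sum sums_mult fk_sums) simp
  from sums_diff[OF taylor_coeff_sums[OF assms z] this]
  show "(\<lambda>j. (taylor_coeff f j - (\<Sum>k\<in>{1..n}. c k * fk_coeff k j)) * z ^ j) sums
      (f z - (\<Sum>k\<in>{1..n}. c k * fk k z))"
    by (simp add: left_diff_distrib sum_distrib_right mult.assoc)
qed simp

theorem mainTheorem12:
  assumes "f \<in> hardy2" and "(\<epsilon>::real) > 0"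
  shows "\<exists>(n::nat) (c::nat \<Rightarrow> complex).
           h2_norm (\<lambda>z. f z - (\<Sum>k\<in>{1..n}. c k * fk k z)) < \<epsilon>"
proof -
  have hol: "f holomorphic_on ball 0 1" and sb: "summable (\<lambda>j. (norm (taylor_coeff f j))\<^sup>2)"
    using assms(1) by (auto simp: hardy2_def)
  obtain n c where
    approx: "(\<Sum>j. (norm (taylor_coeff f j - (\<Sum>k\<in>{1..n}. c k * fk_coeff k j)))\<^sup>2) < \<epsilon>\<^sup>2"
    using square_summable_approx_by_fk_coeff[OF sb, of "\<epsilon>\<^sup>2"] assms(2) by auto
  have "h2_norm (\<lambda>z. f z - (\<Sum>k\<in>{1..n}. c k * fk k z))
      = sqrt (\<Sum>j. (norm (taylor_coeff f j - (\<Sum>k\<in>{1..n}. c k * fk_coeff k j)))\<^sup>2)"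
    unfolding h2_norm_def taylor_coeff_diff_fk_combination[OF hol] ..
  also have "\<dots> < \<epsilon>"
    using real_sqrt_less_mono[OF approx] assms(2) by simp
  finally show ?thesis by blast
qed

end
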